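(* Let $k>0$, $\sigma>0$, $\eta>0$ and $\beta\in(0,1)$ be real numbers, and let \[ A:=\begin{pmatrix} 1+\sigma\eta& 0& 0\\ -k& 1& 0\\ 0& -1& 1\end{pmatrix}^{-1}\begin{pmatrix} \sigma\eta& \eta& 1\\ 0& \beta& 0\\ 0& 0& 1\end{pmatrix}. \] Then: (i) One has \[ A=\begin{pmatrix} \frac{\sigma\eta}{1+\sigma\eta}& \frac{\eta}{1+\sigma\eta} & \frac{1}{1+\sigma\eta}\\ \frac{k\sigma\eta}{1+\sigma\eta}& \frac{k\eta}{1+\sigma\eta}+\beta& \frac{k}{1+\sigma\eta}\\ \frac{k\sigma\eta}{1+\sigma\eta}& \frac{k\eta}{1+\sigma\eta}+\beta& \frac{k}{1+\sigma\eta}+1\end{pmatrix}. \] (ii) The eigenvalues of $A$ are exactly the roots of $P(x)=x^3-bx^2+cx-d$, where \[ b=\frac{\sigma\eta+k(1+\eta)}{1+\sigma\eta}+1+\beta,\quad c=(1+\beta)\frac{\sigma\eta}{1+\sigma\eta}+\frac{k\eta}{1+\sigma\eta}+\beta,\quad d=\frac{\beta\sigma\eta}{1+\sigma\eta}. \] (iii) The model is unconditionally determined: for every $(k,\sigma,\eta,\beta)$ with $k>0$, $\sigma>0$, $\eta>0$, $0<\beta<1$, the matrix $A$ has two eigenvalues inside the unit disk and the remaining one outside the unit disk.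
   Context: The unit disk means the open set $\{z\in\mathbb{C}:\ |z|<1\}$. The parameter space is $S=\{(k,\sigma,\eta,\beta)\in\mathbb{R}^4:\ k>0,\sigma>0,\eta>0,0<\beta<1\}$; "unconditionally determined" means the determinacy property (two eigenvalues of $A$ inside the unit disk, one outside) holds for every point of $S$. *)

theory Defs
  imports Complex_Main "Jordan_Normal_Form.Matrix" "Jordan_Normal_Form.Char_Poly"
    "Jordan_Normal_Form.Gauss_Jordan_Elimination"
begin

definition Lmat :: "real \<Rightarrow> real \<Rightarrow> real \<Rightarrow> real \<Rightarrow> real mat" where
  "Lmat k s e b = mat_of_rows_list 3 [[1 + s*e, 0, 0], [-k, 1, 0], [0, -1, 1]]"

definition Rmat :: "real \<Rightarrow> real \<Rightarrow> real \<Rightarrow> real \<Rightarrow> real mat" where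
  "Rmat k s e b = mat_of_rows_list 3 [[s*e, e, 1], [0, b, 0], [0, 0, 1]]"

definition Amat :: "real \<Rightarrow> real \<Rightarrow> real \<Rightarrow> real \<Rightarrow> real mat" where
  "Amat k s e b = the (mat_inverse (Lmat k s e b)) * Rmat k s e b"

definition Pb :: "real \<Rightarrow> real \<Rightarrow> real \<Rightarrow> real \<Rightarrow> real" where
  "Pb k s e b = (s*e + k*(1+e)) / (1 + s*e) + 1 + b"
definition Pc :: "real \<Rightarrow> real \<Rightarrow> real \<Rightarrow> real \<Rightarrow> real" where
  "Pc k s e b = (1+b) * (s*e / (1 + s*e)) + k*e / (1 + s*e) + b"
definition Pd :: "real \<Rightarrow> real \<Rightarrow> real \<Rightarrow> real \<Rightarrow> real" where
  "Pd k s e b = b*s*e / (1 + s*e)"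

definition Ppoly :: "real \<Rightarrow> real \<Rightarrow> real \<Rightarrow> real \<Rightarrow> complex poly" where
  "Ppoly k s e b = [: - complex_of_real (Pd k s e b), complex_of_real (Pc k s e b),
                     - complex_of_real (Pb k s e b), 1 :]"

end

theory Submission
  imports Defs
begin

text \<open>After computing \<open>A = L\<^sup>-\<^sup>1 R\<close> and its characteristic polynomial \<open>P\<close>, one finds
  \<open>P(1) = -k/(1 + \<sigma>\<eta>) < 0\<close>, \<open>P(-1) < 0\<close> and \<open>0 < d < 1\<close>. Since \<open>P(1) < 0\<close> and \<open>P\<close> is monic,
  \<open>P\<close> has a real root \<open>r > 1\<close>. Dividing it off leaves \<open>x\<^sup>2 + p x + q\<close> with \<open>q = d/r\<close>,
  so \<open>|q| < 1\<close>, and the signs of \<open>P(\<plusminus>1) = (\<plusminus>1 - r)(1 \<plusminus> p + q)\<close> give \<open>|p| < 1 + q\<close>: by the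
  Schur--Cohn criterion both roots of the quadratic factor lie in the unit disc.\<close>

lemma mat_inverse_eq_right_inverse:
  fixes A B :: "'a :: field mat"
  assumes A: "A \<in> carrier_mat n n" and B: "B \<in> carrier_mat n n" and AB: "A * B = 1\<^sub>m n"
  shows "mat_inverse A = Some B"
proof (cases "mat_inverse A")
  case None
  have "A \<in> Units (ring_mat TYPE('a) n ())"
    using A B AB mat_mult_left_right_inverse[OF A B AB] unfolding Units_def ring_mat_def by auto
  with mat_inverse(1)[OF A None, of "()"] show ?thesis by blast
next
  case (Some C)
  with mat_inverse(2)[OF A] have CA: "C * A = 1\<^sub>m n" and C: "C \<in> carrier_mat n n" by auto
  have "C = C * (A * B)" using C by (simp add: AB)
  also have "\<dots> = (C * A) * B" using A B C by (simp add: assoc_mult_mat)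
  also have "\<dots> = B" using B by (simp add: CA)
  finally show ?thesis using Some by simp
qed

lemma det_dim_2:
  assumes "(A :: 'a :: comm_ring_1 mat) \<in> carrier_mat 2 2"
  shows "det A = A$$(0,0) * A$$(1,1) - A$$(0,1) * A$$(1,0)"
proof -
  have "det A = (\<Sum>j<2. A $$ (0,j) * cofactor A 0 j)"
    by (rule laplace_expansion_row[OF assms]) simp
  also have "\<dots> = A$$(0,0) * A$$(1,1) - A$$(0,1) * A$$(1,0)"
    using assms
    apply (simp add: cofactor_def numeral_2_eq_2 lessThan_Suc)
    apply (subst (1 2) laplace_expansion_row[where i=0 and n=1])
    apply (auto simp: cofactor_def mat_delete_def)
    done
  finally show ?thesis .
qed

lemma det_dim_3:
  assumes "(A :: 'a :: comm_ring_1 mat) \<in> carrier_mat 3 3"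
  shows "det A = A$$(0,0) * (A$$(1,1) * A$$(2,2) - A$$(1,2) * A$$(2,1))
     - A$$(0,1) * (A$$(1,0) * A$$(2,2) - A$$(1,2) * A$$(2,0))
     + A$$(0,2) * (A$$(1,0) * A$$(2,1) - A$$(1,1) * A$$(2,0))"
proof -
  have "det A = (\<Sum>j<3. A $$ (0,j) * cofactor A 0 j)"
    by (rule laplace_expansion_row[OF assms]) simp
  also have "\<dots> = A $$ (0,0) * cofactor A 0 0 + A $$ (0,1) * cofactor A 0 1
      + A $$ (0,2) * cofactor A 0 2"
    by (simp add: numeral_3_eq_3 numeral_2_eq_2 lessThan_Suc)
  also have "\<dots> = A$$(0,0) * (A$$(1,1) * A$$(2,2) - A$$(1,2) * A$$(2,1))
     - A$$(0,1) * (A$$(1,0) * A$$(2,2) - A$$(1,2) * A$$(2,0))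
     + A$$(0,2) * (A$$(1,0) * A$$(2,1) - A$$(1,1) * A$$(2,0))"
    using assms unfolding cofactor_def
    by (subst (1 2 3) det_dim_2)
      (auto simp: mat_delete_def insert_index_def algebra_simps numeral_2_eq_2)
  finally show ?thesis .
qed

lemma char_poly_mat_of_rows_list_3:
  fixes a00 a01 a02 a10 a11 a12 a20 a21 a22 :: "'a :: comm_ring_1"
  shows "char_poly (mat_of_rows_list 3 [[a00, a01, a02], [a10, a11, a12], [a20, a21, a22]])
    = [: -(a00 * (a11 * a22 - a12 * a21) - a01 * (a10 * a22 - a12 * a20) + a02 * (a10 * a21 - a11 * a20)),
        a00 * a11 - a01 * a10 + a00 * a22 - a02 * a20 + a11 * a22 - a12 * a21,
        -(a00 + a11 + a22), 1:]"
proof -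
  let ?A = "mat_of_rows_list 3 [[a00, a01, a02], [a10, a11, a12], [a20, a21, a22]]"
  have "?A \<in> carrier_mat 3 3" by (simp add: mat_of_rows_list_def numeral_3_eq_3)
  then have C: "char_poly_matrix ?A \<in> carrier_mat 3 3" by simp
  show ?thesis unfolding char_poly_def det_dim_3[OF C]
    by (simp add: char_poly_matrix_def mat_of_rows_list_def numeral_3_eq_3 numeral_2_eq_2
        algebra_simps)
qed

lemma mat_of_rows_list_3_mult:
  fixes a00 a01 a02 a10 a11 a12 a20 a21 a22 b00 b01 b02 b10 b11 b12 b20 b21 b22 :: "'a :: comm_ring_1"
  shows "mat_of_rows_list 3 [[a00, a01, a02], [a10, a11, a12], [a20, a21, a22]]
      * mat_of_rows_list 3 [[b00, b01, b02], [b10, b11, b12], [b20, b21, b22]]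
    = mat_of_rows_list 3
      [[a00 * b00 + a01 * b10 + a02 * b20, a00 * b01 + a01 * b11 + a02 * b21, a00 * b02 + a01 * b12 + a02 * b22],
       [a10 * b00 + a11 * b10 + a12 * b20, a10 * b01 + a11 * b11 + a12 * b21, a10 * b02 + a11 * b12 + a12 * b22],
       [a20 * b00 + a21 * b10 + a22 * b20, a20 * b01 + a21 * b11 + a22 * b21, a20 * b02 + a21 * b12 + a22 * b22]]"
proof -
  have less_3: "i < 3 \<longleftrightarrow> i = 0 \<or> i = Suc 0 \<or> i = Suc (Suc 0)" for i :: nat by auto
  have sum_3: "(\<Sum>i\<in>{0..<3}. f i) = f 0 + f (Suc 0) + f (Suc (Suc 0))" for f :: "nat \<Rightarrow> 'a"
    by (simp add: numeral_3_eq_3 add.assoc)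
  show ?thesis
    by (rule eq_matI) (auto simp: mat_of_rows_list_def less_3 scalar_prod_def sum_3 less_Suc_eq)
qed

lemma one_mat_3: "(1\<^sub>m 3 :: 'a :: comm_ring_1 mat) = mat_of_rows_list 3 [[1, 0, 0], [0, 1, 0], [0, 0, 1]]"
  by (rule eq_matI) (auto simp: mat_of_rows_list_def less_Suc_eq numeral_3_eq_3)

lemma real_poly_root_gt:
  fixes f :: "real poly"
  assumes "lead_coeff f > 0" and "poly f a < 0"
  obtains r where "r > a" and "poly f r = 0"
proof -
  obtain n where n: "\<And>x. x \<ge> n \<Longrightarrow> poly f x \<ge> lead_coeff f"
    using poly_pinfty_gt_lc[OF assms(1)] by blast
  have "poly f (max n (a + 1)) > 0" using n[of "max n (a + 1)"] assms(1) by simp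
  then show ?thesis
    using poly_IVT_pos[of a "max n (a + 1)" f] assms(2) that by force
qed

lemma abs_lt_one_if_shifted_products_pos:
  fixes u v :: real
  assumes "(1 - u) * (1 - v) > 0" and "(1 + u) * (1 + v) > 0" and "\<bar>u * v\<bar> < 1"
  shows "\<bar>u\<bar> < 1"
proof (rule ccontr)
  assume "\<not> \<bar>u\<bar> < 1"
  then have "\<bar>v\<bar> < 1"
    using assms(3) by (metis abs_mult less_1_mult linorder_neqE_linordered_idom
        mult.right_neutral mult_1 order_less_imp_not_less)
  then have "1 - u > 0" "1 + u > 0"
    using assms(1,2) by (auto simp: zero_less_mult_iff)
  with \<open>\<not> \<bar>u\<bar> < 1\<close> show False by linarith
qed

lemma quadratic_roots_in_unit_disc:
  fixes p q :: real
  assumes q: "\<bar>q\<bar> < 1" and p: "\<bar>p\<bar> < 1 + q"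
  obtains z1 z2 :: complex
  where "[:of_real q, of_real p, 1:] = [:-z1, 1:] * [:-z2, 1:]" and "cmod z1 < 1" and "cmod z2 < 1"
proof -
  have "\<exists>z1 z2 :: complex. z1 + z2 = of_real (-p) \<and> z1 * z2 = of_real q \<and> cmod z1 < 1 \<and> cmod z2 < 1"
  proof (cases "p^2 - 4*q \<ge> 0")
    case True
    define u where "u = (-p + sqrt (p^2 - 4*q)) / 2"
    define v where "v = (-p - sqrt (p^2 - 4*q)) / 2"
    have uv: "u + v = -p" "u * v = q"
      using True by (auto simp: u_def v_def field_simps power2_eq_square)
    then have signs: "(1 - u) * (1 - v) > 0" "(1 + u) * (1 + v) > 0"
      using p by (auto simp: algebra_simps)
    have "\<bar>u\<bar> < 1" "\<bar>v\<bar> < 1"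
      using abs_lt_one_if_shifted_products_pos[OF signs] abs_lt_one_if_shifted_products_pos[of v u] signs uv q
      by (simp_all add: mult.commute)
    with uv show ?thesis
      by (intro exI[of _ "of_real u"] exI[of _ "of_real v"])
        (auto simp flip: of_real_add of_real_mult)
  next
    case False
    define z where "z = Complex (-p/2) (sqrt (4*q - p^2) / 2)"
    have "(sqrt (4*q - p^2))^2 = 4*q - p^2" using False by simp
    then have "z * cnj z = of_real q"
      by (simp add: z_def complex_eq_iff power2_eq_square field_simps)
    then have "cmod z < 1"
      using q by (smt (verit, best) complex_mod_cnj mult_ge1_I norm_mult norm_of_real)
    moreover have "z + cnj z = of_real (-p)" by (simp add: z_def complex_eq_iff)
    ultimately show ?thesis
      using \<open>z * cnj z = of_real q\<close> by (intro exI[of _ z] exI[of _ "cnj z"]) auto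
  qed
  then obtain z1 z2 :: complex where "z1 + z2 = of_real (-p)" "z1 * z2 = of_real q"
    "cmod z1 < 1" "cmod z2 < 1" by blast
  moreover have "[:-z1, 1:] * [:-z2, 1:] = [:z1 * z2, -(z1 + z2), 1:]" by simp
  ultimately have "[:of_real q, of_real p, 1:] = [:-z1, 1:] * [:-z2, 1:]"
    by (metis add.inverse_inverse of_real_minus)
  with \<open>cmod z1 < 1\<close> \<open>cmod z2 < 1\<close> show ?thesis using that by blast
qed

lemma cubic_two_roots_in_unit_disc:
  fixes b c d :: real
  assumes at_one: "1 - b + c - d < 0" and at_minus_one: "-1 - b - c - d < 0" and d: "\<bar>d\<bar> < 1"
  shows "\<exists>z1 z2 z3 :: complex.
    [:-of_real d, of_real c, -of_real b, 1:] = [:-z1, 1:] * [:-z2, 1:] * [:-z3, 1:]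
    \<and> cmod z1 < 1 \<and> cmod z2 < 1 \<and> cmod z3 > 1"
proof -
  obtain r where "r > 1" and "poly [:-d, c, -b, 1:] r = 0"
    using real_poly_root_gt[of "[:-d, c, -b, 1:]" 1] at_one by auto
  then have root: "r^3 - b * r^2 + c * r - d = 0"
    by (simp add: power2_eq_square power3_eq_cube algebra_simps)
  define p where "p = r - b"
  define q where "q = d / r"
  have d_eq: "d = r * q" using \<open>r > 1\<close> by (simp add: q_def)
  have c_eq: "c = q - r * p"
  proof -
    have "c * r = (q - r * p) * r"
      using root d_eq by (simp add: p_def power2_eq_square power3_eq_cube algebra_simps)
    then show ?thesis using \<open>r > 1\<close> by simp
  qed
  have "(1 - r) * (1 + p + q) < 0" "(-1 - r) * (1 - p + q) < 0"
    using at_one at_minus_one unfolding c_eq d_eq p_def by (simp_all add: algebra_simps)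
  then have "\<bar>p\<bar> < 1 + q" using \<open>r > 1\<close> by (auto simp: mult_less_0_iff)
  moreover have "\<bar>q\<bar> < 1"
    using d \<open>r > 1\<close> unfolding q_def abs_divide by (simp add: divide_less_eq_1_pos)
  ultimately obtain z1 z2 where factor: "[:of_real q, of_real p, 1:] = [:-z1, 1:] * [:-z2, 1:]"
    and "cmod z1 < 1" "cmod z2 < 1"
    using quadratic_roots_in_unit_disc by blast
  have "[:of_real q, of_real p, 1:] * [:-of_real r, 1::complex:]
      = [:-of_real (r * q), of_real (q - r * p), -of_real (r - p), 1:]"
    by (simp add: algebra_simps)
  also have "\<dots> = [:-of_real d, of_real c, -of_real b, 1:]"
    by (simp add: c_eq d_eq p_def)
  finally have "[:-of_real d, of_real c, -of_real b, 1:] = [:-z1, 1:] * [:-z2, 1:] * [:-of_real r, 1:]"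
    by (simp add: factor)
  with \<open>cmod z1 < 1\<close> \<open>cmod z2 < 1\<close> \<open>r > 1\<close> show ?thesis
    by (intro exI[of _ z1] exI[of _ z2] exI[of _ "of_real r"]) simp
qed

lemma Lmat_inverse:
  assumes "1 + s*e \<noteq> 0"
  shows "mat_inverse (Lmat k s e b) = Some (mat_of_rows_list 3
    [[1/(1 + s*e), 0, 0], [k/(1 + s*e), 1, 0], [k/(1 + s*e), 1, 1]])"
proof (rule mat_inverse_eq_right_inverse)
  show "Lmat k s e b * mat_of_rows_list 3
      [[1/(1 + s*e), 0, 0], [k/(1 + s*e), 1, 0], [k/(1 + s*e), 1, 1]] = 1\<^sub>m 3"
    unfolding Lmat_def mat_of_rows_list_3_mult one_mat_3 using assms by simp
qed (auto simp: Lmat_def mat_of_rows_list_def numeral_3_eq_3)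

lemma Amat_eq:
  assumes "1 + s*e \<noteq> 0"
  shows "Amat k s e b = mat_of_rows_list 3
    [[s*e/(1 + s*e), e/(1 + s*e), 1/(1 + s*e)],
     [k*s*e/(1 + s*e), k*e/(1 + s*e) + b, k/(1 + s*e)],
     [k*s*e/(1 + s*e), k*e/(1 + s*e) + b, k/(1 + s*e) + 1]]"
  unfolding Amat_def Lmat_inverse[OF assms] option.sel Rmat_def mat_of_rows_list_3_mult
  using assms by (simp add: field_simps)

lemma char_poly_Amat:
  assumes "1 + s*e \<noteq> 0"
  shows "char_poly (map_mat complex_of_real (Amat k s e b)) = Ppoly k s e b"
proof -
  define a where "a = 1 + s*e"
  have "a \<noteq> 0" using assms by (simp add: a_def)
  have A: "Amat k s e b \<in> carrier_mat 3 3"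
    by (simp add: Amat_eq[OF assms] mat_of_rows_list_def numeral_3_eq_3)
  have "char_poly (Amat k s e b) = [:-Pd k s e b, Pc k s e b, -Pb k s e b, 1:]"
    unfolding Amat_eq[OF assms] char_poly_mat_of_rows_list_3 Pb_def Pc_def Pd_def a_def[symmetric]
    using \<open>a \<noteq> 0\<close> by (simp add: field_simps)
  then show ?thesis
    unfolding of_real_hom.char_poly_hom[OF A] Ppoly_def by simp
qed

lemma Ppoly_coeffs_bounds:
  assumes "k > 0" and "s > 0" and "e > 0" and "0 < b" and "b < 1"
  shows "1 - Pb k s e b + Pc k s e b - Pd k s e b < 0"
    and "-1 - Pb k s e b - Pc k s e b - Pd k s e b < 0"
    and "\<bar>Pd k s e b\<bar> < 1"
proof -
  define a where "a = 1 + s*e"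
  have "s * e > 0" using assms by simp
  then have "b * (s * e) < 1 * (s * e)" using assms by (intro mult_strict_right_mono) auto
  with \<open>s * e > 0\<close> have "a > 0" "b * (s * e) < a" by (simp_all add: a_def)
  have "1 - Pb k s e b + Pc k s e b - Pd k s e b = - k / a"
    unfolding Pb_def Pc_def Pd_def a_def[symmetric] using \<open>a > 0\<close> by (simp add: field_simps)
  then show "1 - Pb k s e b + Pc k s e b - Pd k s e b < 0" using \<open>a > 0\<close> assms by simp
  have "Pb k s e b > 0" "Pc k s e b > 0" "Pd k s e b > 0"
    unfolding Pb_def Pc_def Pd_def a_def[symmetric] using \<open>a > 0\<close> assms
    by (auto intro!: add_pos_pos divide_pos_pos mult_pos_pos)
  then show "-1 - Pb k s e b - Pc k s e b - Pd k s e b < 0" by simp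
  show "\<bar>Pd k s e b\<bar> < 1"
    using \<open>s * e > 0\<close> \<open>b * (s * e) < a\<close> \<open>a > 0\<close> assms
    unfolding Pd_def a_def[symmetric] by (simp add: mult.assoc)
qed

theorem theorem4p2:
  fixes k \<sigma> \<eta> \<beta> :: real
  assumes "k > 0" and "\<sigma> > 0" and "\<eta> > 0" and "0 < \<beta>" and "\<beta> < 1"
  shows "Amat k \<sigma> \<eta> \<beta> = mat_of_rows_list 3
           [[\<sigma>*\<eta>/(1+\<sigma>*\<eta>), \<eta>/(1+\<sigma>*\<eta>), 1/(1+\<sigma>*\<eta>)],
            [k*\<sigma>*\<eta>/(1+\<sigma>*\<eta>), k*\<eta>/(1+\<sigma>*\<eta>) + \<beta>, k/(1+\<sigma>*\<eta>)],
            [k*\<sigma>*\<eta>/(1+\<sigma>*\<eta>), k*\<eta>/(1+\<sigma>*\<eta>) + \<beta>, k/(1+\<sigma>*\<eta>) + 1]]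
       \<and> {z. eigenvalue (map_mat complex_of_real (Amat k \<sigma> \<eta> \<beta>)) z}
           = {z. poly (Ppoly k \<sigma> \<eta> \<beta>) z = 0}
       \<and> (\<exists>z1 z2 z3 :: complex.
            char_poly (map_mat complex_of_real (Amat k \<sigma> \<eta> \<beta>))
              = [:-z1, 1:] * [:-z2, 1:] * [:-z3, 1:]
            \<and> cmod z1 < 1 \<and> cmod z2 < 1 \<and> cmod z3 > 1)"
proof -
  have "1 + \<sigma> * \<eta> \<noteq> 0" using mult_pos_pos[OF assms(2,3)] by linarith
  note char_poly_eq = char_poly_Amat[OF this]
  have A: "map_mat complex_of_real (Amat k \<sigma> \<eta> \<beta>) \<in> carrier_mat 3 3"
    using \<open>1 + \<sigma> * \<eta> \<noteq> 0\<close> by (simp add: Amat_eq mat_of_rows_list_def numeral_3_eq_3)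
  have "{z. eigenvalue (map_mat complex_of_real (Amat k \<sigma> \<eta> \<beta>)) z}
      = {z. poly (Ppoly k \<sigma> \<eta> \<beta>) z = 0}"
    using eigenvalue_root_char_poly[OF A] char_poly_eq by simp
  moreover have "\<exists>z1 z2 z3 :: complex.
      char_poly (map_mat complex_of_real (Amat k \<sigma> \<eta> \<beta>)) = [:-z1, 1:] * [:-z2, 1:] * [:-z3, 1:]
      \<and> cmod z1 < 1 \<and> cmod z2 < 1 \<and> cmod z3 > 1"
    unfolding char_poly_eq Ppoly_def
    by (rule cubic_two_roots_in_unit_disc[OF Ppoly_coeffs_bounds[OF assms]])
  ultimately show ?thesis
    using Amat_eq[OF \<open>1 + \<sigma> * \<eta> \<noteq> 0\<close>] by simp
qed

end
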